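(* Let $\ell$ be an odd prime, $N\ge1$, $\zeta=e^{2\pi i/\ell^N}$. Then $$\frac{1}{\ell^N}\mathrm{Tr}_{\mathbb{Q}_\ell(\zeta)/\mathbb{Q}_\ell}\Big((1-\zeta)^{\ell^{N-1}(\ell N-N+1)-1}\Big)\equiv(-\ell)^{N-1}\pmod{\ell^N}.$$ *)

theory Defs
  imports "HOL-Number_Theory.Number_Theory" "HOL-Analysis.Analysis"
begin

definition zeta :: "nat \<Rightarrow> complex" where
  "zeta n = exp (2 * of_real pi * \<i> / of_nat n)"

text \<open>Trace from Q_l(zeta) to Q_l of an element given as an integer-coefficient
 expression f(zeta), n = l^N: since the cyclotomic polynomial Phi_n is irreducible
 over Q_l, the embeddings of Q_l(zeta) over Q_l send zeta to zeta^k, k a unit mod n,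
 so the trace is the sum of the Galois conjugates f(zeta^k).\<close>
definition cyclo_trace :: "nat \<Rightarrow> (complex \<Rightarrow> complex) \<Rightarrow> complex" where
  "cyclo_trace n f = (\<Sum>k\<in>{k. 1 \<le> k \<and> k \<le> n \<and> coprime k n}. f (zeta n ^ k))"

end

(*
  Write n = l^N, m = l^(N-1) and e = m (l - 1), so that the exponent is e N + m - 1.
  In Z[x] we have (1 - x)^m = 1 - x^m and (1 - x^m)^(l-1) = Phi_n(x) modulo l, hence
  (1 - x)^e = Phi_n(x) - l H(x) with H(1) = 1. At a primitive n-th root of unity z this gives
  (1 - z)^e = -l H(z), so the trace is (-l)^N Tr F with F = (1 - x)^(m-1) H^N, and it remains
  to show Tr F = -m mod n. The trace over the primitive n-th roots is the sum over all n-th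
  roots minus the sum over all m-th roots, and a sum of an integer polynomial over all d-th
  roots of unity is d times an integer. Writing H^N = 1 + (1 - x) G, the polynomial F is
  congruent modulo l to (1 - x)^(m-1) + (1 - x^m) G, which on the m-th roots of unity equals
  (1 - x)^(m-1); its sum over them is m, as its degree is less than m.
*)

theory Submission
  imports Defs "HOL-Computational_Algebra.Polynomial"
begin

lemma zeta_power: "zeta d ^ j = exp (2 * of_real pi * \<i> * of_nat j / of_nat d)"
  unfolding zeta_def exp_of_nat_mult[symmetric] by (simp add: field_simps)

lemma zeta_power_eq_1_iff: "d > 0 \<Longrightarrow> zeta d ^ j = 1 \<longleftrightarrow> d dvd j"
  unfolding zeta_power by (rule complex_root_unity_eq_1) simp

lemma zeta_mult_power:
  assumes "l > 0"
  shows "zeta (l * m) ^ l = zeta m"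
proof (cases "m = 0")
  case False
  have "zeta (l * m) ^ l = exp (of_nat l * (2 * of_real pi * \<i> / of_nat (l * m)))"
    unfolding zeta_def exp_of_nat_mult by simp
  also have "\<dots> = zeta m"
    using assms False by (simp add: zeta_def divide_simps)
  finally show ?thesis .
qed (simp add: zeta_def)

definition unity_root_sum :: "nat \<Rightarrow> (complex \<Rightarrow> complex) \<Rightarrow> complex" where
  "unity_root_sum d f = (\<Sum>t = 1..d. f (zeta d ^ t))"

lemma unity_root_sum_power:
  assumes "d > 0"
  shows "unity_root_sum d (\<lambda>z. z ^ j) = (if d dvd j then of_nat d else 0)"
proof -
  define w where "w = zeta d ^ j"
  have "unity_root_sum d (\<lambda>z. z ^ j) = (\<Sum>t = 1..d. w ^ t)"
    unfolding unity_root_sum_def w_def by (simp add: power_mult[symmetric] mult.commute)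
  also have "\<dots> = w * (\<Sum>t<d. w ^ t)"
    by (simp add: sum.atLeast1_atMost_eq sum_distrib_left)
  also have "\<dots> = (if d dvd j then of_nat d else 0)"
  proof (cases "d dvd j")
    case True
    then have "w = 1" using assms by (simp add: w_def zeta_power_eq_1_iff)
    then show ?thesis using True by simp
  next
    case False
    then have "w \<noteq> 1" using assms by (simp add: w_def zeta_power_eq_1_iff)
    moreover have "w ^ d = 1"
      using assms by (simp add: w_def zeta_power_eq_1_iff flip: power_mult)
    ultimately show ?thesis using False by (simp add: geometric_sum)
  qed
  finally show ?thesis .
qed

lemma unity_root_sum_poly:
  assumes "d > 0"
  shows "unity_root_sum d (poly p) = of_nat d * (\<Sum>j | j \<le> degree p \<and> d dvd j. coeff p j)"
proof -
  have "unity_root_sum d (poly p) = (\<Sum>j\<le>degree p. coeff p j * unity_root_sum d (\<lambda>z. z ^ j))"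
    unfolding unity_root_sum_def poly_altdef by (subst sum.swap) (simp add: sum_distrib_left)
  also have "\<dots> = (\<Sum>j\<le>degree p. if d dvd j then of_nat d * coeff p j else 0)"
    using assms by (intro sum.cong) (simp_all add: unity_root_sum_power)
  also have "\<dots> = of_nat d * (\<Sum>j | j \<le> degree p \<and> d dvd j. coeff p j)"
    by (simp add: sum.inter_filter[symmetric] sum_distrib_left atMost_def Collect_conj_eq)
  finally show ?thesis .
qed

lemma unity_root_sum_poly_degree_less:
  assumes "d > 0" "degree p < d"
  shows "unity_root_sum d (poly p) = of_nat d * coeff p 0"
proof -
  have "{j. j \<le> degree p \<and> d dvd j} = {0}"
    using assms by (auto dest: dvd_imp_le)
  then show ?thesis using unity_root_sum_poly[OF assms(1)] by simp
qed

lemma coprime_prime_right_iff: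
  assumes "prime (l :: nat)"
  shows "coprime k l \<longleftrightarrow> \<not> l dvd k"
  using assms by (metis coprime_absorb_left coprime_commute not_prime_unit prime_imp_coprime)

lemma cyclo_trace_prime_power:
  assumes "prime l" "N > 0"
  shows "cyclo_trace (l ^ N) f = unity_root_sum (l ^ N) f - unity_root_sum (l ^ (N - 1)) f"
proof -
  define m where "m = l ^ (N - 1)"
  have "l > 0" using assms(1) prime_gt_0_nat by blast
  have n: "l ^ N = l * m"
    using assms(2) by (simp add: m_def power_eq_if)
  have "{k. 1 \<le> k \<and> k \<le> l ^ N \<and> coprime k (l ^ N)} = {1..l ^ N} - {k \<in> {1..l ^ N}. l dvd k}"
    using assms by (auto simp: coprime_prime_right_iff)
  also have "{k \<in> {1..l ^ N}. l dvd k} = (\<lambda>t. l * t) ` {1..m}"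
    unfolding n using \<open>l > 0\<close> by (auto simp: image_iff elim!: dvdE intro!: bexI[where x = "_ div l"])
  finally have units: "{k. 1 \<le> k \<and> k \<le> l ^ N \<and> coprime k (l ^ N)} = {1..l * m} - (\<lambda>t. l * t) ` {1..m}"
    unfolding n .
  have "cyclo_trace (l ^ N) f
      = unity_root_sum (l * m) f - (\<Sum>t = 1..m. f (zeta (l * m) ^ (l * t)))"
    unfolding cyclo_trace_def units unfolding unity_root_sum_def n using \<open>l > 0\<close>
    by (subst sum_diff) (auto simp: sum.reindex inj_on_def)
  also have "(\<Sum>t = 1..m. f (zeta (l * m) ^ (l * t))) = unity_root_sum m f"
    unfolding unity_root_sum_def power_mult zeta_mult_power[OF \<open>l > 0\<close>] ..
  finally show ?thesis unfolding n m_def .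
qed

lemma cyclotomic_prime_power_root:
  assumes "prime l" "N > 0" "coprime k (l ^ N)"
  shows "(\<Sum>i<l. (zeta (l ^ N) ^ k) ^ (l ^ (N - 1) * i)) = 0"
proof -
  define w where "w = zeta (l ^ N) ^ (k * l ^ (N - 1))"
  have "l > 0" using assms(1) prime_gt_0_nat by blast
  have n: "l ^ N = l * l ^ (N - 1)"
    using assms(2) by (simp add: power_eq_if)
  have "w ^ l = 1"
    unfolding w_def using \<open>l > 0\<close>
    by (simp add: zeta_power_eq_1_iff n flip: power_mult)
  moreover have "w \<noteq> 1"
    unfolding w_def using \<open>l > 0\<close> assms
    by (simp add: zeta_power_eq_1_iff n coprime_prime_right_iff)
  ultimately have "(\<Sum>i<l. w ^ i) = 0"
    by (simp add: geometric_sum)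
  then show ?thesis
    by (simp add: w_def power_mult)
qed

lemma dvd_power_diff_power:
  fixes a b c :: "'a :: comm_ring_1"
  assumes "c dvd a - b"
  shows "c dvd a ^ k - b ^ k"
proof (induction k)
  case (Suc k)
  have "a ^ Suc k - b ^ Suc k = a * (a ^ k - b ^ k) + (a - b) * b ^ k"
    by (simp add: algebra_simps)
  then show ?case
    using Suc assms by simp
qed simp

lemma dvd_diff_trans:
  fixes a b c d :: "'a :: comm_ring_1"
  assumes "c dvd a - b" "c dvd b - d"
  shows "c dvd a - d"
  using dvd_add[OF assms] by simp

lemma prime_dvd_freshmans_dream:
  fixes x y :: "'a :: comm_ring_1"
  assumes "prime p"
  shows "of_nat p dvd (x + y) ^ p - x ^ p - y ^ p"
proof -
  have "p > 0" using assms prime_gt_0_nat by blast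
  define summand where "summand k = of_nat (p choose k) * x ^ k * y ^ (p - k)" for k
  have "(x + y) ^ p = (\<Sum>k\<le>p. summand k)"
    unfolding summand_def by (rule binomial_ring)
  also have "\<dots> = (\<Sum>k\<in>{..p} - {0, p}. summand k) + (\<Sum>k\<in>{0, p}. summand k)"
    by (rule sum.subset_diff) auto
  also have "(\<Sum>k\<in>{0, p}. summand k) = y ^ p + x ^ p"
    using \<open>p > 0\<close> by (simp add: summand_def)
  finally have "(x + y) ^ p - x ^ p - y ^ p = (\<Sum>k\<in>{..p} - {0, p}. summand k)"
    by (simp add: algebra_simps)
  also have "of_nat p dvd \<dots>"
  proof (rule dvd_sum)
    fix k assume "k \<in> {..p} - {0, p}"
    then have "p dvd (p choose k)"
      using assms by (intro dvd_choose_prime) auto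
    then show "of_nat p dvd summand k"
      unfolding summand_def by (auto elim!: dvdE simp: mult.assoc)
  qed
  finally show ?thesis .
qed

lemma prime_dvd_one_minus_power_prime_power_diff:
  fixes y :: "'a :: comm_ring_1"
  assumes "prime l" "odd l"
  shows "of_nat l dvd (1 - y) ^ (l ^ a) - (1 - y ^ (l ^ a))"
proof (induction a)
  case (Suc a)
  let ?z = "y ^ (l ^ a)"
  have "of_nat l dvd ((1 - y) ^ (l ^ a)) ^ l - (1 - ?z) ^ l"
    using Suc by (rule dvd_power_diff_power)
  moreover have "of_nat l dvd (1 - ?z) ^ l - (1 - ?z ^ l)"
    using prime_dvd_freshmans_dream[OF assms(1), of 1 "- ?z"] assms(2) by (simp add: algebra_simps)
  ultimately have "of_nat l dvd ((1 - y) ^ (l ^ a)) ^ l - (1 - ?z ^ l)"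
    by (rule dvd_diff_trans)
  then show ?case
    by (simp only: power_Suc2 power_mult)
qed simp

lemma prime_dvd_signed_choose_pred_minus_1:
  assumes "prime p" "j < p"
  shows "int p dvd (-1) ^ j * int (p - 1 choose j) - 1"
  using assms(2)
proof (induction j)
  case (Suc j)
  have "p choose Suc j = (p - 1 choose j) + (p - 1 choose Suc j)"
    using assms(1) prime_gt_0_nat by (cases p) auto
  moreover have "p dvd p choose Suc j"
    using Suc.prems assms(1) by (intro dvd_choose_prime) auto
  ultimately have pascal: "int p dvd (-1) ^ j * (int (p - 1 choose j) + int (p - 1 choose Suc j))"
    by (simp flip: of_nat_add)
  have "int p dvd ((-1) ^ j * int (p - 1 choose j) - 1)
      - (-1) ^ j * (int (p - 1 choose j) + int (p - 1 choose Suc j))"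
    using Suc by (intro dvd_diff[OF _ pascal]) simp
  also have "\<dots> = (-1) ^ Suc j * int (p - 1 choose Suc j) - 1"
    by (simp add: algebra_simps)
  finally show ?case .
qed simp

lemma of_int_dvd_imp_of_nat_dvd:
  fixes y :: "'a :: comm_ring_1"
  assumes "int p dvd c"
  shows "of_nat p dvd of_int c * y"
  using assms by (auto elim!: dvdE simp: mult.assoc)

lemma prime_dvd_one_minus_power_pred_diff:
  fixes y :: "'a :: comm_ring_1"
  assumes "prime p"
  shows "of_nat p dvd (1 - y) ^ (p - 1) - (\<Sum>i<p. y ^ i)"
proof -
  have "p > 0" using assms prime_gt_0_nat by blast
  then have "{..<p} = {..p - 1}" by auto
  have "(1 - y) ^ (p - 1) = (- y + 1) ^ (p - 1)"
    by simp
  also have "\<dots> = (\<Sum>j\<le>p - 1. of_nat (p - 1 choose j) * (- y) ^ j * 1 ^ (p - 1 - j))"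
    by (rule binomial_ring)
  also have "\<dots> = (\<Sum>j\<le>p - 1. of_int ((-1) ^ j * int (p - 1 choose j)) * y ^ j)"
    by (intro sum.cong refl) (simp add: power_minus[of y] mult_ac)
  finally have "(1 - y) ^ (p - 1) - (\<Sum>i<p. y ^ i)
      = (\<Sum>j\<le>p - 1. of_int ((-1) ^ j * int (p - 1 choose j) - 1) * y ^ j)"
    unfolding \<open>{..<p} = {..p - 1}\<close> by (simp add: left_diff_distrib sum_subtractf)
  also have "of_nat p dvd \<dots>"
    using assms \<open>p > 0\<close>
    by (intro dvd_sum of_int_dvd_imp_of_nat_dvd prime_dvd_signed_choose_pred_minus_1) auto
  finally show ?thesis .
qed

lemma prime_dvd_one_minus_power_cyclotomic_diff:
  fixes y :: "'a :: comm_ring_1"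
  assumes "prime l" "odd l"
  shows "of_nat l dvd (1 - y) ^ (l ^ a * (l - 1)) - (\<Sum>i<l. y ^ (l ^ a * i))"
proof -
  let ?z = "y ^ (l ^ a)"
  have "of_nat l dvd ((1 - y) ^ (l ^ a)) ^ (l - 1) - (1 - ?z) ^ (l - 1)"
    using prime_dvd_one_minus_power_prime_power_diff[OF assms] by (rule dvd_power_diff_power)
  moreover have "of_nat l dvd (1 - ?z) ^ (l - 1) - (\<Sum>i<l. ?z ^ i)"
    using assms(1) by (rule prime_dvd_one_minus_power_pred_diff)
  ultimately have "of_nat l dvd ((1 - y) ^ (l ^ a)) ^ (l - 1) - (\<Sum>i<l. ?z ^ i)"
    by (rule dvd_diff_trans)
  then show ?thesis
    by (simp flip: power_mult)
qed

lemma map_poly_of_int_add [simp]: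
  "map_poly of_int (p + q) = (map_poly of_int p + map_poly of_int q :: 'a :: comm_ring_1 poly)"
  by (intro poly_eqI) (simp add: coeff_map_poly)

lemma map_poly_of_int_diff [simp]:
  "map_poly of_int (p - q) = (map_poly of_int p - map_poly of_int q :: 'a :: comm_ring_1 poly)"
  by (intro poly_eqI) (simp add: coeff_map_poly)

lemma map_poly_of_int_mult [simp]:
  "map_poly of_int (p * q) = (map_poly of_int p * map_poly of_int q :: 'a :: comm_ring_1 poly)"
  by (intro poly_eqI) (simp add: coeff_map_poly coeff_mult)

lemma map_poly_of_int_power [simp]:
  "map_poly of_int (p ^ k) = (map_poly of_int p ^ k :: 'a :: comm_ring_1 poly)"
  by (induction k) simp_all

lemma map_poly_of_int_sum [simp]:
  "map_poly of_int (\<Sum>i\<in>A. f i) = (\<Sum>i\<in>A. map_poly of_int (f i) :: 'a :: comm_ring_1 poly)"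
  by (induction A rule: infinite_finite_induct) simp_all

lemma map_poly_of_int_of_nat [simp]:
  "map_poly of_int (of_nat k) = (of_nat k :: 'a :: comm_ring_1 poly)"
  by (simp add: of_nat_poly map_poly_pCons)

lemma unity_root_sum_of_int_poly:
  assumes "d > 0"
  obtains c :: int where "unity_root_sum d (poly (map_poly of_int p)) = of_nat d * of_int c"
proof
  have "degree (map_poly of_int p :: complex poly) = degree p"
    by (simp add: degree_map_poly)
  then show "unity_root_sum d (poly (map_poly of_int p))
      = of_nat d * of_int (\<Sum>j | j \<le> degree p \<and> d dvd j. coeff p j)"
    using assms by (simp add: unity_root_sum_poly coeff_map_poly)
qed

lemma unity_root_sum_of_int_poly_cong:
  assumes "d > 0" "of_nat k dvd p - q"
  obtains c :: int where
    "unity_root_sum d (poly (map_poly of_int p))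
       = unity_root_sum d (poly (map_poly of_int q)) + of_nat (d * k) * of_int c"
proof -
  obtain r where r: "p = q + of_nat k * r"
    using assms(2) by (metis dvdE add_diff_cancel_left' add_diff_eq)
  obtain c where c: "unity_root_sum d (poly (map_poly of_int r)) = of_nat d * of_int c"
    using assms(1) by (rule unity_root_sum_of_int_poly)
  have "unity_root_sum d (poly (map_poly of_int p))
      = unity_root_sum d (poly (map_poly of_int q)) + of_nat k * unity_root_sum d (poly (map_poly of_int r))"
    unfolding unity_root_sum_def r by (simp add: sum.distrib sum_distrib_left)
  then show ?thesis
    using c by (intro that[of c]) (simp add: algebra_simps)
qed

lemma cyclo_trace_int_poly_cong:
  fixes G :: "int poly"
  assumes "prime l" "odd l" "N > 0"
  obtains t :: int where
    "cyclo_trace (l ^ N) (poly (map_poly of_int ([:1, -1:] ^ (l ^ (N - 1) - 1) * (1 + [:1, -1:] * G))))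
       = of_int t"
    "[t = - int (l ^ (N - 1))] (mod int (l ^ N))"
proof -
  define m where "m = l ^ (N - 1)"
  define F where "F = [:1, -1:] ^ (m - 1) * (1 + [:1, -1:] * G)"
  define F' where "F' = [:1, -1:] ^ (m - 1) + (1 - [:0, 1:] ^ m) * G"
  have "l > 0" using assms(1) prime_gt_0_nat by blast
  then have "m > 0" by (simp add: m_def)
  have n: "l ^ N = m * l"
    unfolding m_def using assms(3) by (simp only: power_minus_mult)
  have "l ^ N > 0"
    using \<open>l > 0\<close> by simp
  then obtain a where a: "unity_root_sum (l ^ N) (poly (map_poly of_int F)) = of_nat (l ^ N) * of_int a"
    by (rule unity_root_sum_of_int_poly)
  have "[:1, -1:] ^ (m - 1) * ([:1, -1:] * G) = [:1, -1:] ^ m * G"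
    using \<open>m > 0\<close> by (simp only: mult.assoc[symmetric] power_minus_mult)
  then have "F - F' = ([:1, -1:] ^ m - (1 - [:0, 1:] ^ m)) * G"
    unfolding F_def F'_def by (simp add: distrib_left left_diff_distrib)
  also have "of_nat l dvd \<dots>"
    using prime_dvd_one_minus_power_prime_power_diff[OF assms(1,2), of "[:0, 1:] :: int poly" "N - 1"]
    unfolding m_def[symmetric] by (simp add: one_pCons)
  finally have "of_nat l dvd F - F'" .
  with \<open>m > 0\<close> obtain b where b: "unity_root_sum m (poly (map_poly of_int F))
      = unity_root_sum m (poly (map_poly of_int F')) + of_nat (m * l) * of_int b"
    by (rule unity_root_sum_of_int_poly_cong)
  have "unity_root_sum m (poly (map_poly of_int F')) = unity_root_sum m (poly ([:1, -1:] ^ (m - 1)))"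
    unfolding unity_root_sum_def F'_def using \<open>m > 0\<close>
    by (intro sum.cong) (simp_all add: map_poly_pCons zeta_power_eq_1_iff flip: power_mult)
  also have "\<dots> = of_nat m"
    using \<open>m > 0\<close> by (subst unity_root_sum_poly_degree_less) (auto simp: degree_power_le coeff_0_power)
  finally have "unity_root_sum m (poly (map_poly of_int F)) = of_nat m + of_nat (m * l) * of_int b"
    unfolding b by simp
  moreover have "cyclo_trace (l ^ N) (poly (map_poly of_int F))
      = unity_root_sum (l ^ N) (poly (map_poly of_int F)) - unity_root_sum m (poly (map_poly of_int F))"
    unfolding m_def by (rule cyclo_trace_prime_power[OF assms(1,3)])
  moreover have "(of_nat l ^ N :: complex) = of_nat m * of_nat l"
    using n by (simp flip: of_nat_power of_nat_mult)
  ultimately have "cyclo_trace (l ^ N) (poly (map_poly of_int F)) = of_int (int (m * l) * (a - b) - int m)"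
    using a by (simp add: algebra_simps)
  moreover have "[int (m * l) * (a - b) - int m = - int m] (mod int (l ^ N))"
    unfolding n by (simp add: cong_iff_dvd_diff)
  ultimately show ?thesis
    using that unfolding F_def m_def by blast
qed

lemma one_minus_X_power_cyclotomic:
  assumes "prime l" "odd l"
  obtains H :: "int poly" where
    "[:1, -1:] ^ (l ^ a * (l - 1)) = (\<Sum>i<l. [:0, 1:] ^ (l ^ a * i)) - of_nat l * H"
    "poly H 1 = 1"
proof -
  have "l > 1" using assms(1) prime_gt_1_nat by blast
  obtain H' :: "int poly" where H': "[:1, -1:] ^ (l ^ a * (l - 1)) - (\<Sum>i<l. [:0, 1:] ^ (l ^ a * i)) = of_nat l * H'"
    using prime_dvd_one_minus_power_cyclotomic_diff[OF assms, of "[:0, 1:] :: int poly" a]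
    by (auto simp: one_pCons elim!: dvdE)
  then have H: "[:1, -1:] ^ (l ^ a * (l - 1)) = (\<Sum>i<l. [:0, 1:] ^ (l ^ a * i)) - of_nat l * (- H')"
    by (simp add: algebra_simps)
  have "poly ([:1, -1:] ^ (l ^ a * (l - 1))) 1 = (0 :: int)"
    using \<open>l > 1\<close> by (simp add: power_0_left)
  then have "0 = int l - int l * poly (- H') 1"
    unfolding H by (simp add: poly_sum)
  then have "int l * (poly (- H') 1 - 1) = 0"
    by (simp add: algebra_simps)
  then have "poly (- H') 1 = 1"
    using \<open>l > 1\<close> by simp
  with H show ?thesis by (rule that)
qed

lemma cyclo_trace_one_minus_zeta_power:
  assumes "prime l" "odd l" "N > 0"
  obtains t :: int where
    "cyclo_trace (l ^ N) (\<lambda>z. (1 - z) ^ (l ^ (N - 1) * (l - 1) * N + l ^ (N - 1) - 1))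
       = (- of_nat l) ^ N * of_int t"
    "[t = - int (l ^ (N - 1))] (mod int (l ^ N))"
proof -
  define m where "m = l ^ (N - 1)"
  obtain H :: "int poly" where H: "[:1, -1:] ^ (m * (l - 1)) = (\<Sum>i<l. [:0, 1:] ^ (m * i)) - of_nat l * H"
    and "poly H 1 = 1"
    using one_minus_X_power_cyclotomic[OF assms(1,2), of "N - 1"] unfolding m_def by blast
  then have "[:-1, 1:] dvd H ^ N - 1"
    by (simp add: poly_eq_0_iff_dvd[symmetric])
  then obtain G where "H ^ N - 1 = [:-1, 1:] * G"
    by (rule dvdE)
  then have HN: "H ^ N = 1 + [:1, -1:] * (- G)"
    by (simp add: diff_eq_eq add.commute)
  define F where "F = [:1, -1:] ^ (m - 1) * H ^ N"
  have "(1 - zeta (l ^ N) ^ k) ^ (m * (l - 1) * N + m - 1)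
      = (- of_nat l) ^ N * poly (map_poly of_int F) (zeta (l ^ N) ^ k)"
    if "coprime k (l ^ N)" for k
  proof -
    define z where "z = zeta (l ^ N) ^ k"
    have "(\<Sum>i<l. z ^ (m * i)) = 0"
      unfolding z_def m_def using assms(1,3) that by (rule cyclotomic_prime_power_root)
    then have root: "(1 - z) ^ (m * (l - 1)) = - of_nat l * poly (map_poly of_int H) z"
      using arg_cong[OF H, of "\<lambda>p. poly (map_poly of_int p) z"]
      by (simp add: map_poly_pCons poly_sum)
    have "m > 0"
      using assms(1) prime_gt_0_nat by (simp add: m_def)
    then have "m * (l - 1) * N + m - 1 = m * (l - 1) * N + (m - 1)"
      by simp
    then have "(1 - z) ^ (m * (l - 1) * N + m - 1) = ((1 - z) ^ (m * (l - 1))) ^ N * (1 - z) ^ (m - 1)"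
      by (simp only: power_add power_mult)
    also have "\<dots> = (- of_nat l) ^ N * poly (map_poly of_int F) z"
      unfolding root F_def power_mult_distrib by (simp add: map_poly_pCons mult_ac)
    finally show ?thesis
      unfolding z_def .
  qed
  then have trace: "cyclo_trace (l ^ N) (\<lambda>z. (1 - z) ^ (m * (l - 1) * N + m - 1))
      = (- of_nat l) ^ N * cyclo_trace (l ^ N) (poly (map_poly of_int F))"
    unfolding cyclo_trace_def by (simp add: sum_distrib_left)
  obtain t where
    "cyclo_trace (l ^ N) (poly (map_poly of_int F)) = of_int t" "[t = - int m] (mod int (l ^ N))"
    unfolding F_def HN m_def using assms by (rule cyclo_trace_int_poly_cong)
  with trace show ?thesis
    unfolding m_def by (intro that[of t]) simp_all
qed

lemma neg_power_mult_cong: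
  fixes t :: int
  assumes "N > 0" "[t = - int (l ^ (N - 1))] (mod int (l ^ N))"
  shows "[(- int l) ^ N * t = int l ^ N * (- int l) ^ (N - 1)] (mod int l ^ (2 * N))"
proof -
  obtain K where N: "N = Suc K" using assms(1) gr0_implies_Suc by blast
  have "int l ^ N dvd t + int (l ^ (N - 1))"
    using assms(2) by (simp add: cong_iff_dvd_diff)
  moreover have "int l ^ N dvd (- int l) ^ N"
    by (simp add: power_minus[of "int l"])
  ultimately have "int l ^ N * int l ^ N dvd (- int l) ^ N * (t + int (l ^ (N - 1)))"
    by (simp add: mult_dvd_mono mult.commute)
  moreover have "(- int l) ^ N * (t + int (l ^ (N - 1))) = (- int l) ^ N * t - int l ^ N * (- int l) ^ (N - 1)"
    unfolding N by (simp add: algebra_simps)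
  ultimately show ?thesis
    by (simp add: cong_iff_dvd_diff mult_2 power_add)
qed

theorem mainTheorem9:
  fixes l N :: nat
  assumes "prime l" and "odd l" and "N \<ge> 1"
  shows "\<exists>T::int.
           cyclo_trace (l ^ N) (\<lambda>z. (1 - z) ^ (l ^ (N - 1) * (l * N - N + 1) - 1)) = of_int T
         \<and> [T = int l ^ N * (- int l) ^ (N - 1)] (mod (int l ^ (2 * N)))"
proof -
  have "N > 0" using assms(3) by simp
  obtain t where trace:
    "cyclo_trace (l ^ N) (\<lambda>z. (1 - z) ^ (l ^ (N - 1) * (l - 1) * N + l ^ (N - 1) - 1))
       = (- of_nat l) ^ N * of_int t"
    and cong: "[t = - int (l ^ (N - 1))] (mod int (l ^ N))"
    using assms(1,2) \<open>N > 0\<close> by (rule cyclo_trace_one_minus_zeta_power)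
  have "l * N - N = (l - 1) * N"
    by (simp add: diff_mult_distrib)
  then have "l ^ (N - 1) * (l * N - N + 1) - 1 = l ^ (N - 1) * (l - 1) * N + l ^ (N - 1) - 1"
    by (simp add: algebra_simps)
  with trace have "cyclo_trace (l ^ N) (\<lambda>z. (1 - z) ^ (l ^ (N - 1) * (l * N - N + 1) - 1))
      = of_int ((- int l) ^ N * t)"
    by simp
  then show ?thesis
    using neg_power_mult_cong[OF \<open>N > 0\<close> cong] by blast
qed

end
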